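(* Let $p\ge0$, $\Omega>0$, and $S^{(1)},S^{(2)}\in\mathcal B_\Omega$ with $S^{(l)}=\{\lambda^{(l)}_n,\alpha^{(l)}_n\}$. Let $\delta_n=|\rho_n^{(1)}-\rho_n^{(2)}|+|\alpha_n^{(1)}-\alpha_n^{(2)}|$ and $Z=(\sum_{n\ge1}\delta_n^2)^{1/2}$. Then for all $n\ge1$ and $x\in[0,\pi]$, with $C$ depending only on $p,\Omega$: (1) $|\tilde\varphi^{(1)}_{n0}(x)-\tilde\varphi^{(2)}_{n0}(x)|\le C\delta_n$; (2) $|\tilde\psi^{(1)}_{n0}(x)-\tilde\psi^{(2)}_{n0}(x)|\le C\delta_n$; (3) $\|\tilde H^{(1)}(x)-\tilde H^{(2)}(x)\|_{m\to m}\le CZ$. Here objects with superscript $(l)$ are constructed from $S^{(l)}$.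
   Context: $\mathcal S_p$: collections $S=\{\lambda_n,\alpha_n\}_{n\ge1}$ of complex numbers with $\rho_n:=\sqrt{\lambda_n}$ ($\arg\rho_n\in[-\pi/2,\pi/2)$), $\rho_n=n-p-1+\varkappa_n$, $\alpha_n=2/\pi+\kappa_n$, $\{\varkappa_n\},\{\kappa_n\}\in l_2$. Model data: $\tilde\rho_n=0$ for $n\le p+1$, $\tilde\rho_n=n-p-1$ for $n\ge p+1$, $\tilde\lambda_n=\tilde\rho_n^2$; $\tilde\alpha_1=1/\pi$, $\tilde\alpha_n=0$ for $2\le n\le p+1$, $\tilde\alpha_n=2/\pi$ for $n\ge p+2$. $\xi_n=|\rho_n-\tilde\rho_n|+|\alpha_n-\tilde\alpha_n|$, $\mathcal B_\Omega=\{S\in\mathcal S_p:(\sum\xi_n^2)^{1/2}\le\Omega\}$. For a given $S$: $\lambda_{n0}=\lambda_n,\rho_{n0}=\rho_n,\alpha_{n0}=\alpha_n$, $\lambda_{n1}=\tilde\lambda_n,\rho_{n1}=\tilde\rho_n,\alpha_{n1}=\tilde\alpha_n$, $\hat\rho_n=\rho_n-\tilde\rho_n$; $\tilde\varphi_{ni}(x)=\cos(\rho_{ni}x)$; $\tilde D(x,\lambda,\mu)=\int_0^x\cos(\sqrt\lambda t)\cos(\sqrt\mu t)dt$; $\tilde Q_{ni,kj}(x)=\alpha_{kj}\tilde D(x,\rho_{ni}^2,\rho_{kj}^2)$; $\tilde Q_{nk}=\begin{pmatrix}\tilde Q_{n0,k0}&-\tilde Q_{n0,k1}\\ \tilde Q_{n1,k0}&-\tilde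 Q_{n1,k1}\end{pmatrix}$; $T_k^{-1}=\begin{pmatrix}\hat\rho_k&1\\0&1\end{pmatrix}$; for $\hat\rho_n\neq0$, $T_n=\begin{pmatrix}\hat\rho_n^{-1}&-\hat\rho_n^{-1}\\0&1\end{pmatrix}$. $\tilde\psi_n=(\tilde\psi_{n0},\tilde\psi_{n1})^T=T_n(\tilde\varphi_{n0},\tilde\varphi_{n1})^T$ if $\hat\rho_n\ne0$, and $(-x\sin(\rho_{n1}x),\cos(\rho_{n1}x))^T$ if $\hat\rho_n=0$. $\tilde H_{nk}=T_n\tilde Q_{nk}T_k^{-1}$ if $\hat\rho_n\neq0$; $\tilde H_{nk}=\begin{pmatrix}\partial_\rho[\alpha_{k0}\tilde D(x,\rho^2,\lambda_{k0})]_{\rho=\rho_{n0}}&-\partial_\rho[\alpha_{k1}\tilde D(x,\rho^2,\lambda_{k1})]_{\rho=\rho_{n0}}\\ \tilde Q_{n1,k0}&-\tilde Q_{n1,k1}\end{pmatrix}T_k^{-1}$ if $\hat\rho_n=0$. $m$: Banach space of bounded sequences $(a_{ni})_{n\ge1,i=0,1}$ with sup norm; $(\tilde H(x)a)_n=\sum_k\tilde H_{nk}(x)a_k$. *)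

theory Defs
  imports "HOL-Analysis.Analysis"
begin

text \<open>A data collection S = {lambda_n, alpha_n} is a pair of sequences indexed by n (only n >= 1 is used).\<close>
type_synonym sdata = "(nat \<Rightarrow> complex) \<times> (nat \<Rightarrow> complex)"

text \<open>Square root branch with arg in [-pi/2, pi/2).\<close>
definition sqrtb :: "complex \<Rightarrow> complex" where
  "sqrtb z = (if Re (csqrt z) = 0 \<and> Im (csqrt z) > 0 then - csqrt z else csqrt z)"

definition lam :: "sdata \<Rightarrow> nat \<Rightarrow> complex" where "lam S n = fst S n"
definition alph :: "sdata \<Rightarrow> nat \<Rightarrow> complex" where "alph S n = snd S n"
definition rho :: "sdata \<Rightarrow> nat \<Rightarrow> complex" where "rho S n = sqrtb (lam S n)"

definition rhoT :: "nat \<Rightarrow> nat \<Rightarrow> complex" where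
  "rhoT p n = (if n \<le> p + 1 then 0 else of_nat (n - p - 1))"
definition lamT :: "nat \<Rightarrow> nat \<Rightarrow> complex" where
  "lamT p n = (rhoT p n)\<^sup>2"
definition alphT :: "nat \<Rightarrow> nat \<Rightarrow> complex" where
  "alphT p n = (if n = 1 then 1 / of_real pi else if n \<le> p + 1 then 0 else 2 / of_real pi)"

definition in_Sp :: "nat \<Rightarrow> sdata \<Rightarrow> bool" where
  "in_Sp p S \<longleftrightarrow>
     summable (\<lambda>n. (cmod (rho S (Suc n) - (of_int (int (Suc n) - int p - 1))))\<^sup>2) \<and>
     summable (\<lambda>n. (cmod (alph S (Suc n) - 2 / of_real pi))\<^sup>2)"

definition xi :: "nat \<Rightarrow> sdata \<Rightarrow> nat \<Rightarrow> real" where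
  "xi p S n = cmod (rho S n - rhoT p n) + cmod (alph S n - alphT p n)"

definition inBall :: "nat \<Rightarrow> real \<Rightarrow> sdata \<Rightarrow> bool" where
  "inBall p \<Omega> S \<longleftrightarrow> in_Sp p S \<and> summable (\<lambda>n. (xi p S (Suc n))\<^sup>2) \<and>
     sqrt (\<Sum>n. (xi p S (Suc n))\<^sup>2) \<le> \<Omega>"

definition lam_i :: "nat \<Rightarrow> sdata \<Rightarrow> nat \<Rightarrow> nat \<Rightarrow> complex" where
  "lam_i p S n i = (if i = 0 then lam S n else lamT p n)"
definition rho_i :: "nat \<Rightarrow> sdata \<Rightarrow> nat \<Rightarrow> nat \<Rightarrow> complex" where
  "rho_i p S n i = (if i = 0 then rho S n else rhoT p n)"
definition alph_i :: "nat \<Rightarrow> sdata \<Rightarrow> nat \<Rightarrow> nat \<Rightarrow> complex" where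
  "alph_i p S n i = (if i = 0 then alph S n else alphT p n)"
definition rhohat :: "nat \<Rightarrow> sdata \<Rightarrow> nat \<Rightarrow> complex" where
  "rhohat p S n = rho S n - rhoT p n"

text \<open>2x2 matrices as functions on indices {0,1}.\<close>
definition mat2 :: "'a \<Rightarrow> 'a \<Rightarrow> 'a \<Rightarrow> 'a \<Rightarrow> nat \<Rightarrow> nat \<Rightarrow> 'a" where
  "mat2 a b c d = (\<lambda>i j. if i = 0 then (if j = 0 then a else b) else (if j = 0 then c else d))"
definition mmult2 :: "(nat \<Rightarrow> nat \<Rightarrow> complex) \<Rightarrow> (nat \<Rightarrow> nat \<Rightarrow> complex) \<Rightarrow> nat \<Rightarrow> nat \<Rightarrow> complex" where
  "mmult2 A B = (\<lambda>i j. \<Sum>l<2. A i l * B l j)"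
definition mvmult2 :: "(nat \<Rightarrow> nat \<Rightarrow> complex) \<Rightarrow> (nat \<Rightarrow> complex) \<Rightarrow> nat \<Rightarrow> complex" where
  "mvmult2 A v = (\<lambda>i. \<Sum>l<2. A i l * v l)"

definition tD :: "real \<Rightarrow> complex \<Rightarrow> complex \<Rightarrow> complex" where
  "tD x l m = integral {0..x} (\<lambda>t. cos (csqrt l * of_real t) * cos (csqrt m * of_real t))"

definition phiT :: "nat \<Rightarrow> sdata \<Rightarrow> nat \<Rightarrow> nat \<Rightarrow> real \<Rightarrow> complex" where
  "phiT p S n i x = cos (rho_i p S n i * of_real x)"

definition Tinv :: "nat \<Rightarrow> sdata \<Rightarrow> nat \<Rightarrow> nat \<Rightarrow> nat \<Rightarrow> complex" where
  "Tinv p S k = mat2 (rhohat p S k) 1 0 1"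
definition Tm :: "nat \<Rightarrow> sdata \<Rightarrow> nat \<Rightarrow> nat \<Rightarrow> nat \<Rightarrow> complex" where
  "Tm p S n = mat2 (1 / rhohat p S n) (- 1 / rhohat p S n) 0 1"

definition psiT :: "nat \<Rightarrow> sdata \<Rightarrow> nat \<Rightarrow> nat \<Rightarrow> real \<Rightarrow> complex" where
  "psiT p S n i x =
     (if rhohat p S n \<noteq> 0 then mvmult2 (Tm p S n) (\<lambda>j. phiT p S n j x) i
      else (if i = 0 then - of_real x * sin (rho_i p S n 1 * of_real x)
            else cos (rho_i p S n 1 * of_real x)))"

definition Qt :: "nat \<Rightarrow> sdata \<Rightarrow> real \<Rightarrow> nat \<Rightarrow> nat \<Rightarrow> nat \<Rightarrow> nat \<Rightarrow> complex" where
  "Qt p S x n i k j = alph_i p S k j * tD x ((rho_i p S n i)\<^sup>2) ((rho_i p S k j)\<^sup>2)"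

definition Qm :: "nat \<Rightarrow> sdata \<Rightarrow> real \<Rightarrow> nat \<Rightarrow> nat \<Rightarrow> nat \<Rightarrow> nat \<Rightarrow> complex" where
  "Qm p S x n k = mat2 (Qt p S x n 0 k 0) (- Qt p S x n 0 k 1) (Qt p S x n 1 k 0) (- Qt p S x n 1 k 1)"

definition Hm :: "nat \<Rightarrow> sdata \<Rightarrow> real \<Rightarrow> nat \<Rightarrow> nat \<Rightarrow> nat \<Rightarrow> nat \<Rightarrow> complex" where
  "Hm p S x n k =
     (if rhohat p S n \<noteq> 0 then mmult2 (mmult2 (Tm p S n) (Qm p S x n k)) (Tinv p S k)
      else mmult2
        (mat2 (deriv (\<lambda>r. alph_i p S k 0 * tD x (r\<^sup>2) (lam_i p S k 0)) (rho_i p S n 0))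
              (- deriv (\<lambda>r. alph_i p S k 1 * tD x (r\<^sup>2) (lam_i p S k 1)) (rho_i p S n 0))
              (Qt p S x n 1 k 0) (- Qt p S x n 1 k 1))
        (Tinv p S k))"

definition delta :: "sdata \<Rightarrow> sdata \<Rightarrow> nat \<Rightarrow> real" where
  "delta S1 S2 n = cmod (rho S1 n - rho S2 n) + cmod (alph S1 n - alph S2 n)"

definition Zd :: "sdata \<Rightarrow> sdata \<Rightarrow> real" where
  "Zd S1 S2 = sqrt (\<Sum>n. (delta S1 S2 (Suc n))\<^sup>2)"

end

(*
  Writing D(x, z, w) for the integral of cos (z t) cos (w t) over [0, x], so that the kernel of the
  paper is D(x, sqrt lambda, sqrt mu), every entry of H_nk is built from D(x, rho~_n, w),
  from its divided difference in the first argument at rho~_n (this covers both cases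
  rho^_n <> 0 and rho^_n = 0), and from the factors alpha_k and rho_k - rho~_k.
  On discs of radius 4 Omega around rho~_n and rho~_k the entire function D is bounded by
  a constant times 1 / (1 + |rho~_n - rho~_k|), so Cauchy estimates make D and its divided
  differences Lipschitz with constants of the same size. Hence the k-th term of row n of
  H(1) - H(2) is bounded by a constant times (delta_k + xi_k delta_n) / (1 + |rho~_n - rho~_k|),
  and Cauchy-Schwarz against the uniformly square-summable weights 1 / (1 + |rho~_n - rho~_k|)
  bounds the row sums by Z. Parts (1) and (2) are the same Lipschitz estimates for
  z |-> cos (z x) and its divided difference.
*)

theory Submission
  imports Defs "HOL-Complex_Analysis.Complex_Analysis"
begin

section \<open>The cosine kernel\<close>

definition int_cos :: "real \<Rightarrow> complex \<Rightarrow> complex" where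
  "int_cos x u = (if u = 0 then of_real x else sin (u * of_real x) / u)"

definition int_cos_cos :: "real \<Rightarrow> complex \<Rightarrow> complex \<Rightarrow> complex" where
  "int_cos_cos x z w = (int_cos x (z - w) + int_cos x (z + w)) / 2"

lemma int_cos_holomorphic: "int_cos x holomorphic_on A"
proof -
  let ?f = "\<lambda>u. sin (u * of_real x)"
  have "deriv ?f 0 = (of_real x :: complex)"
    by (rule DERIV_imp_deriv) (auto intro!: derivative_eq_intros)
  then have "int_cos x = (\<lambda>u. if u = 0 then deriv ?f 0 else (?f u - ?f 0) / (u - 0))"
    by (auto simp: int_cos_def fun_eq_iff)
  moreover have "?f holomorphic_on UNIV"
    by (intro holomorphic_intros)
  then have "(\<lambda>u. if u = 0 then deriv ?f 0 else (?f u - ?f 0) / (u - 0)) holomorphic_on UNIV"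
    by (rule pole_lemma_open) simp
  ultimately show ?thesis
    using holomorphic_on_subset by fastforce
qed

lemma int_cos_compose_holomorphic: "f holomorphic_on A \<Longrightarrow> (\<lambda>z. int_cos x (f z)) holomorphic_on A"
  using holomorphic_on_compose[OF _ int_cos_holomorphic] by (simp add: o_def)

lemma int_cos_cos_holomorphic:
  "(\<lambda>z. int_cos_cos x z w) holomorphic_on A" "int_cos_cos x z holomorphic_on A"
  unfolding int_cos_cos_def by (intro holomorphic_intros int_cos_compose_holomorphic; simp)+

lemma has_integral_int_cos:
  assumes "0 \<le> x"
  shows "((\<lambda>t. cos (u * of_real t)) has_integral int_cos x u) {0..x}"
proof (cases "u = 0")
  case True
  then show ?thesis
    using has_integral_const_real[of "1::complex" 0 x] assms
    by (simp add: int_cos_def scaleR_conv_of_real)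
next
  case False
  have "((\<lambda>t. cos (u * of_real t)) has_integral (sin (u * of_real x) / u - sin (u * of_real 0) / u)) {0..x}"
  proof (rule fundamental_theorem_of_calculus[OF assms])
    fix t
    have "((\<lambda>z. sin (u * z) / u) has_field_derivative cos (u * of_real t)) (at (of_real t))"
      using False by (auto intro!: derivative_eq_intros)
    then show "((\<lambda>t. sin (u * of_real t) / u) has_vector_derivative cos (u * of_real t))
        (at t within {0..x})"
      by (rule has_vector_derivative_real_field)
  qed
  then show ?thesis
    using False by (simp add: int_cos_def)
qed

lemma cos_csqrt_power2: "cos (csqrt (z\<^sup>2) * t) = cos (z * t)"
proof -
  have "csqrt (z\<^sup>2) = z \<or> csqrt (z\<^sup>2) = - z"
    using power2_eq_iff[of "csqrt (z\<^sup>2)" z] by simp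
  then show ?thesis
    by auto
qed

lemma tD_power2_eq_int_cos_cos:
  assumes "0 \<le> x"
  shows "tD x (z\<^sup>2) (w\<^sup>2) = int_cos_cos x z w"
proof -
  have integrand: "cos (csqrt (z\<^sup>2) * of_real t) * cos (csqrt (w\<^sup>2) * of_real t)
      = (cos ((z - w) * of_real t) + cos ((z + w) * of_real t)) / 2" for t
    by (simp only: cos_csqrt_power2 cos_times_cos) (simp add: algebra_simps)
  have "((\<lambda>t. (cos ((z - w) * of_real t) + cos ((z + w) * of_real t)) / 2)
      has_integral int_cos_cos x z w) {0..x}"
    unfolding int_cos_cos_def by (intro has_integral_divide has_integral_add has_integral_int_cos assms)
  then show ?thesis
    unfolding tD_def integrand by (rule integral_unique)
qed

lemma norm_cos_mult_of_real_le:
  assumes "\<bar>Im u\<bar> \<le> L" "0 \<le> t" "t \<le> pi"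
  shows "cmod (cos (u * of_real t)) \<le> exp (L * pi)" "cmod (sin (u * of_real t)) \<le> exp (L * pi)"
proof -
  have "\<bar>Im (u * of_real t)\<bar> \<le> L * pi"
    using assms by (simp add: abs_mult mult_mono)
  then show "cmod (cos (u * of_real t)) \<le> exp (L * pi)" "cmod (sin (u * of_real t)) \<le> exp (L * pi)"
    using cmod_cos_le_exp[of 1 "u * of_real t"] cmod_sin_le_exp[of 1 "u * of_real t"]
    by (auto intro: order_trans)
qed

text \<open>Near the origin use the integral representation, far from it the formula
  \<open>sin (u x) / u\<close>; both give decay like \<open>1 / (1 + |u|)\<close> on strips.\<close>

lemma norm_int_cos_le:
  assumes x: "0 \<le> x" "x \<le> pi" and u: "\<bar>Im u\<bar> \<le> L"
  shows "cmod (int_cos x u) \<le> 2 * pi * exp (L * pi) / (1 + cmod u)"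
proof (cases "cmod u \<le> 1")
  case True
  have "((\<lambda>t. cos (u * of_real t)) has_integral int_cos x u) (cbox 0 x)"
    using has_integral_int_cos[OF x(1)] by simp
  from has_integral_bound[OF _ this] have "cmod (int_cos x u) \<le> exp (L * pi) * x"
    using norm_cos_mult_of_real_le(1)[OF u] x by auto
  also have "\<dots> \<le> pi * exp (L * pi)"
    using x by simp
  also have "\<dots> \<le> 2 * pi * exp (L * pi) / (1 + cmod u)"
  proof -
    have "(1 + cmod u) * (pi * exp (L * pi)) \<le> 2 * (pi * exp (L * pi))"
      using True by (intro mult_right_mono) auto
    then show ?thesis
      by (simp add: le_divide_eq add_pos_nonneg mult.commute mult.left_commute)
  qed
  finally show ?thesis .
next
  case False
  have "cmod (int_cos x u) \<le> exp (L * pi) / cmod u"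
    using False norm_cos_mult_of_real_le(2)[OF u x]
    by (auto simp: int_cos_def norm_divide divide_right_mono)
  also have "\<dots> \<le> 2 * exp (L * pi) / (1 + cmod u)"
  proof -
    have "0 < cmod u" "(1 + cmod u) * exp (L * pi) \<le> 2 * exp (L * pi) * cmod u"
      using False by (auto simp: algebra_simps)
    then show ?thesis
      by (simp add: field_simps add_pos_pos)
  qed
  also have "\<dots> \<le> 2 * pi * exp (L * pi) / (1 + cmod u)"
    using pi_ge_two by (intro divide_right_mono) auto
  finally show ?thesis .
qed

lemma divide_one_plus_le_shift:
  fixes K s t b :: real
  assumes "0 \<le> K" "0 \<le> s" "0 \<le> t" "0 \<le> b" "b \<le> t + s"
  shows "K / (1 + t) \<le> K * (1 + s) / (1 + b)"
proof -
  have "(1 + s) * (1 + t) = 1 + s + t + s * t" "0 \<le> s * t"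
    using assms by (simp_all add: algebra_simps)
  then have "1 + b \<le> (1 + s) * (1 + t)"
    using assms by linarith
  then have "K * (1 + b) \<le> K * (1 + s) * (1 + t)"
    using assms(1) by (metis mult.assoc mult_left_mono)
  then show ?thesis
    using assms by (simp add: field_simps)
qed

definition decay_const :: "real \<Rightarrow> real" where
  "decay_const r = 2 * pi * exp (8 * r * pi) * (1 + 8 * r)"

text \<open>Both \<open>z - w\<close> and \<open>z + w\<close> stay at distance at least \<open>|c - d| - 8 r\<close> from the
  origin, because \<open>c, d \<ge> 0\<close>.\<close>

lemma norm_int_cos_cos_le:
  assumes x: "0 \<le> x" "x \<le> pi" and "0 \<le> r" "0 \<le> c" "0 \<le> d"
    and z: "z \<in> cball (of_real c) (4 * r)" and w: "w \<in> cball (of_real d) (4 * r)"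
  shows "cmod (int_cos_cos x z w) \<le> decay_const r / (1 + \<bar>c - d\<bar>)"
proof -
  define K where "K = 2 * pi * exp (8 * r * pi)"
  have zc: "cmod (z - of_real c) \<le> 4 * r" and wd: "cmod (w - of_real d) \<le> 4 * r"
    using z w by (simp_all add: dist_norm norm_minus_commute)
  then have Im: "\<bar>Im (z - w)\<bar> \<le> 8 * r" "\<bar>Im (z + w)\<bar> \<le> 8 * r"
    using abs_Im_le_cmod[of "z - of_real c"] abs_Im_le_cmod[of "w - of_real d"] by simp_all
  have decay: "cmod (int_cos x v) \<le> K * (1 + 8 * r) / (1 + \<bar>c - d\<bar>)"
    if "\<bar>Im v\<bar> \<le> 8 * r" "\<bar>c - d\<bar> \<le> cmod v + 8 * r" for v
  proof -
    have "cmod (int_cos x v) \<le> K / (1 + cmod v)"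
      using norm_int_cos_le[OF x that(1)] by (simp add: K_def mult.assoc)
    also have "\<dots> \<le> K * (1 + 8 * r) / (1 + \<bar>c - d\<bar>)"
      by (rule divide_one_plus_le_shift) (use that assms in \<open>auto simp: K_def\<close>)
    finally show ?thesis .
  qed
  have "\<bar>c - d\<bar> \<le> cmod (z - w) + 8 * r"
    using norm_diff_triangle_ineq[of "of_real c" "- of_real d" z "- w"]
      norm_triangle_ineq2[of "of_real c - of_real d" "z - w"] zc wd
    by (simp add: norm_minus_commute algebra_simps flip: of_real_diff)
  then have minus: "cmod (int_cos x (z - w)) \<le> K * (1 + 8 * r) / (1 + \<bar>c - d\<bar>)"
    by (rule decay[OF Im(1)])
  have "\<bar>c - d\<bar> \<le> cmod (of_real c + of_real d :: complex)"
    using assms by (simp flip: of_real_add)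
  also have "\<dots> \<le> cmod (z + w) + 8 * r"
    using norm_diff_triangle_ineq[of "of_real c" "of_real d" z w]
      norm_triangle_ineq2[of "of_real c + of_real d" "z + w"] zc wd
    by (simp add: norm_minus_commute algebra_simps)
  finally have plus: "cmod (int_cos x (z + w)) \<le> K * (1 + 8 * r) / (1 + \<bar>c - d\<bar>)"
    by (rule decay[OF Im(2)])
  have "cmod (int_cos_cos x z w) \<le> (cmod (int_cos x (z - w)) + cmod (int_cos x (z + w))) / 2"
    unfolding int_cos_cos_def by (simp add: norm_divide norm_triangle_ineq divide_right_mono)
  also have "\<dots> \<le> decay_const r / (1 + \<bar>c - d\<bar>)"
    using minus plus by (simp add: decay_const_def K_def)
  finally show ?thesis .
qed

section \<open>Cauchy estimates and divided differences\<close>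

lemma norm_deriv_le_cball:
  assumes F: "F holomorphic_on UNIV" and "0 < r"
    and M: "\<And>w. w \<in> cball z r \<Longrightarrow> cmod (F w) \<le> M"
  shows "cmod (deriv F z) \<le> M / r"
proof (rule field_le_epsilon)
  fix e :: real
  assume "0 < e"
  have "cmod ((deriv ^^ 1) F z) \<le> fact 1 * (M + e * r) / r ^ 1"
  proof (rule Cauchy_higher_deriv_bound[where y = 0])
    show "F holomorphic_on ball z r"
      using F by (rule holomorphic_on_subset) auto
    show "continuous_on (cball z r) F"
      using F holomorphic_on_imp_continuous_on continuous_on_subset by blast
    show "F w \<in> ball 0 (M + e * r)" if "w \<in> ball z r" for w
      using M[of w] that mult_pos_pos[OF \<open>0 < e\<close> \<open>0 < r\<close>] by simp
  qed (use \<open>0 < r\<close> in auto)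
  then show "cmod (deriv F z) \<le> M / r + e"
    using \<open>0 < r\<close> by (simp add: add_divide_distrib)
qed

lemma holomorphic_lipschitz_cball:
  assumes F: "F holomorphic_on UNIV" and "0 < r"
    and M: "\<And>w. w \<in> cball c (4 * r) \<Longrightarrow> cmod (F w) \<le> M"
    and "a \<in> cball c (2 * r)" "b \<in> cball c (2 * r)"
  shows "cmod (F a - F b) \<le> M / (2 * r) * cmod (a - b)"
proof (rule field_differentiable_bound[of "cball c (2 * r)" F "deriv F"])
  fix z
  assume z: "z \<in> cball c (2 * r)"
  show "(F has_field_derivative deriv F z) (at z within cball c (2 * r))"
    using F by (auto intro: holomorphic_derivI)
  have "cmod (F w) \<le> M" if "w \<in> cball z (2 * r)" for w
    using M that z unfolding mem_cball by metric
  then show "cmod (deriv F z) \<le> M / (2 * r)"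
    using norm_deriv_le_cball[OF F] \<open>0 < r\<close> by simp
qed (use assms in auto)

definition divided_diff :: "(complex \<Rightarrow> complex) \<Rightarrow> complex \<Rightarrow> complex \<Rightarrow> complex" where
  "divided_diff F a b = (if a = b then deriv F a else (F a - F b) / (a - b))"

lemma divided_diff_holomorphic:
  assumes "F holomorphic_on UNIV"
  shows "(\<lambda>z. divided_diff F z b) holomorphic_on UNIV"
proof -
  have "(\<lambda>z. if z = b then deriv F b else (F z - F b) / (z - b)) holomorphic_on UNIV"
    by (rule pole_lemma_open[OF assms]) simp
  moreover have "(\<lambda>z. if z = b then deriv F b else (F z - F b) / (z - b)) = (\<lambda>z. divided_diff F z b)"
    by (auto simp: divided_diff_def fun_eq_iff)
  ultimately show ?thesis
    by simp
qed

lemma divided_diff_linear: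
  assumes "F holomorphic_on UNIV" "G holomorphic_on UNIV"
  shows "divided_diff (\<lambda>z. a * F z - b * G z) u v = a * divided_diff F u v - b * divided_diff G u v"
proof (cases "u = v")
  case True
  have "((\<lambda>z. a * F z - b * G z) has_field_derivative a * deriv F u - b * deriv G u) (at u)"
    using assms by (intro DERIV_diff DERIV_cmult holomorphic_derivI[of _ UNIV]) auto
  then show ?thesis
    using True by (simp add: divided_diff_def DERIV_imp_deriv)
next
  case False
  then show ?thesis
    by (simp add: divided_diff_def diff_divide_distrib right_diff_distrib)
qed

lemma norm_divided_diff_le:
  assumes F: "F holomorphic_on UNIV" and "0 < r"
    and M: "\<And>w. w \<in> cball c (4 * r) \<Longrightarrow> cmod (F w) \<le> M"
    and a: "a \<in> cball c (2 * r)" and b: "b \<in> cball c (2 * r)"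
  shows "cmod (divided_diff F a b) \<le> M / (2 * r)"
proof (cases "a = b")
  case True
  have "cmod (F w) \<le> M" if "w \<in> cball a (2 * r)" for w
    using M that a unfolding mem_cball by metric
  then show ?thesis
    using True norm_deriv_le_cball[OF F] \<open>0 < r\<close> by (simp add: divided_diff_def)
next
  case False
  then show ?thesis
    using holomorphic_lipschitz_cball[OF assms]
    by (simp add: divided_diff_def norm_divide divide_le_eq)
qed

lemma divided_diff_lipschitz:
  assumes F: "F holomorphic_on UNIV" and "0 < r"
    and M: "\<And>w. w \<in> cball c (4 * r) \<Longrightarrow> cmod (F w) \<le> M"
    and "a1 \<in> cball c r" "a2 \<in> cball c r" and b: "b \<in> cball c r"
  shows "cmod (divided_diff F a1 b - divided_diff F a2 b) \<le> M / (2 * r * r) * cmod (a1 - a2)"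
proof (rule field_differentiable_bound[of "cball c r" "\<lambda>z. divided_diff F z b"])
  have G: "(\<lambda>z. divided_diff F z b) holomorphic_on UNIV"
    by (rule divided_diff_holomorphic[OF F])
  fix z
  assume z: "z \<in> cball c r"
  show "((\<lambda>z. divided_diff F z b) has_field_derivative deriv (\<lambda>z. divided_diff F z b) z)
      (at z within cball c r)"
    using G by (auto intro: holomorphic_derivI)
  have "cmod (divided_diff F w b) \<le> M / (2 * r)" if "w \<in> cball z r" for w
  proof (rule norm_divided_diff_le[OF F \<open>0 < r\<close> M])
    show "w \<in> cball c (2 * r)" "b \<in> cball c (2 * r)"
      using that z b unfolding mem_cball by metric+
  qed
  then have "cmod (deriv (\<lambda>z. divided_diff F z b) z) \<le> M / (2 * r) / r"
    by (rule norm_deriv_le_cball[OF G \<open>0 < r\<close>])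
  then show "cmod (deriv (\<lambda>z. divided_diff F z b) z) \<le> M / (2 * r * r)"
    by simp
qed (use assms in auto)

section \<open>Perturbation of the matrix entries\<close>

lemma add_mult_le_sum_mult_add:
  fixes c1 c2 u v :: real
  assumes "0 \<le> c1" "0 \<le> c2" "0 \<le> u" "0 \<le> v"
  shows "c1 * u + c2 * v \<le> (c1 + c2) * (u + v)"
  using assms by (simp add: algebra_simps)

definition row_const :: "real \<Rightarrow> real \<Rightarrow> real" where
  "row_const r A = (let \<kappa> = 1 + A / (2 * r) in
     (A / (2 * r) + \<kappa> / 2 + A / (2 * r * r)) + (\<kappa> / (2 * r) + \<kappa> / (2 * r * r)) + (A + r * \<kappa>) + \<kappa>)"

text \<open>\<open>E z w\<close> stands for the kernel \<open>D(x, z, w)\<close>, and \<open>c\<close>, \<open>d\<close> for the model values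
  \<open>rho~_n\<close>, \<open>rho~_k\<close>; all perturbed values stay within distance \<open>r\<close> of these centres.\<close>

locale bidisc_kernel =
  fixes E :: "complex \<Rightarrow> complex \<Rightarrow> complex" and c d :: complex and r V :: real
  assumes holomorphic_fst: "\<And>w. (\<lambda>z. E z w) holomorphic_on UNIV"
    and holomorphic_snd: "\<And>z. E z holomorphic_on UNIV"
    and radius_pos: "0 < r"
    and bounded: "\<And>z w. z \<in> cball c (4 * r) \<Longrightarrow> w \<in> cball d (4 * r) \<Longrightarrow> cmod (E z w) \<le> V"
begin

lemma bound_nonneg: "0 \<le> V"
  using bounded[of c d] radius_pos by (auto intro: order_trans[OF norm_ge_zero])

lemma mem_cball_radius: "z \<in> cball a r \<Longrightarrow> z \<in> cball a (2 * r)" "z \<in> cball a r \<Longrightarrow> z \<in> cball a (4 * r)"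
  "z \<in> cball a (2 * r) \<Longrightarrow> z \<in> cball a (4 * r)" "a \<in> cball a r"
  using radius_pos by auto

lemma lincomb_diff_le:
  assumes z: "z \<in> cball c (4 * r)" and w: "w1 \<in> cball d (2 * r)" "w2 \<in> cball d (2 * r)"
    and "cmod a2 \<le> A"
  shows "cmod (a1 * E z w1 - a2 * E z w2) \<le> (1 + A / (2 * r)) * V * (cmod (w1 - w2) + cmod (a1 - a2))"
proof -
  have "0 \<le> A"
    using assms(4) norm_ge_zero order_trans by blast
  have "a1 * E z w1 - a2 * E z w2 = (a1 - a2) * E z w1 + a2 * (E z w1 - E z w2)"
    by (simp add: algebra_simps)
  then have "cmod (a1 * E z w1 - a2 * E z w2) \<le> cmod (a1 - a2) * cmod (E z w1) + cmod a2 * cmod (E z w1 - E z w2)"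
    by (metis norm_mult norm_triangle_ineq)
  also have "\<dots> \<le> cmod (a1 - a2) * V + A * (V / (2 * r) * cmod (w1 - w2))"
  proof (intro add_mono mult_mono)
    show "cmod (E z w1) \<le> V"
      using bounded[OF z] w mem_cball_radius by blast
    show "cmod (E z w1 - E z w2) \<le> V / (2 * r) * cmod (w1 - w2)"
      using holomorphic_lipschitz_cball[OF holomorphic_snd radius_pos bounded[OF z] w] .
  qed (use assms \<open>0 \<le> A\<close> bound_nonneg radius_pos in auto)
  also have "\<dots> = 1 * (V * cmod (a1 - a2)) + A / (2 * r) * (V * cmod (w1 - w2))"
    by simp
  also have "\<dots> \<le> (1 + A / (2 * r)) * (V * cmod (a1 - a2) + V * cmod (w1 - w2))"
    using \<open>0 \<le> A\<close> bound_nonneg radius_pos by (intro add_mult_le_sum_mult_add) auto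
  also have "\<dots> = (1 + A / (2 * r)) * V * (cmod (w1 - w2) + cmod (a1 - a2))"
    by (simp add: algebra_simps add_divide_distrib)
  finally show ?thesis .
qed

lemma lincomb_holomorphic: "(\<lambda>z. a1 * E z w1 - a2 * E z w2) holomorphic_on UNIV"
  by (intro holomorphic_intros holomorphic_fst)

lemma divided_diff_lincomb_le:
  assumes w: "w1 \<in> cball d (2 * r)" "w2 \<in> cball d (2 * r)" and "cmod a2 \<le> A"
    and "u \<in> cball c r"
  shows "cmod (divided_diff (\<lambda>z. a1 * E z w1 - a2 * E z w2) u c)
    \<le> (1 + A / (2 * r)) * V * (cmod (w1 - w2) + cmod (a1 - a2)) / (2 * r)"
  by (rule norm_divided_diff_le[OF lincomb_holomorphic radius_pos lincomb_diff_le[OF _ assms(1-3)]])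
    (use assms mem_cball_radius in auto)

lemma divided_diff_lincomb_lipschitz:
  assumes w: "w1 \<in> cball d (2 * r)" "w2 \<in> cball d (2 * r)" and "cmod a2 \<le> A"
    and "u1 \<in> cball c r" "u2 \<in> cball c r"
  shows "cmod (divided_diff (\<lambda>z. a1 * E z w1 - a2 * E z w2) u1 c
      - divided_diff (\<lambda>z. a1 * E z w1 - a2 * E z w2) u2 c)
    \<le> (1 + A / (2 * r)) * V * (cmod (w1 - w2) + cmod (a1 - a2)) / (2 * r * r) * cmod (u1 - u2)"
  by (rule divided_diff_lipschitz[OF lincomb_holomorphic radius_pos lincomb_diff_le[OF _ assms(1-3)]])
    (use assms mem_cball_radius in auto)

lemma divided_diff_le:
  assumes "w \<in> cball d (4 * r)" "u \<in> cball c r"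
  shows "cmod (divided_diff (\<lambda>z. E z w) u c) \<le> V / (2 * r)"
  by (rule norm_divided_diff_le[OF holomorphic_fst radius_pos bounded[OF _ assms(1)]])
    (use assms mem_cball_radius in auto)

lemma divided_diff_lipschitz_fst:
  assumes "w \<in> cball d (4 * r)" "u1 \<in> cball c r" "u2 \<in> cball c r"
  shows "cmod (divided_diff (\<lambda>z. E z w) u1 c - divided_diff (\<lambda>z. E z w) u2 c) \<le> V / (2 * r * r) * cmod (u1 - u2)"
  by (rule divided_diff_lipschitz[OF holomorphic_fst radius_pos bounded[OF _ assms(1)]])
    (use assms mem_cball_radius in auto)


lemma diff_entry00_le:
  assumes mu: "mu1 \<in> cball d r" "mu2 \<in> cball d r" and a: "cmod a1 \<le> A" "cmod a2 \<le> A"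
    and u: "u1 \<in> cball c r" "u2 \<in> cball c r" and X: "cmod (mu2 - d) \<le> X"
  shows "cmod ((mu1 - d) * (a1 * divided_diff (\<lambda>z. E z mu1) u1 c)
      - (mu2 - d) * (a2 * divided_diff (\<lambda>z. E z mu2) u2 c))
    \<le> (A / (2 * r) + (1 + A / (2 * r)) / 2 + A / (2 * r * r)) * V
      * (cmod (mu1 - mu2) + cmod (a1 - a2) + X * cmod (u1 - u2))"
proof -
  define \<kappa> where "\<kappa> = 1 + A / (2 * r)"
  define dk where "dk = cmod (mu1 - mu2) + cmod (a1 - a2)"
  define D1 where "D1 = divided_diff (\<lambda>z. E z mu1) u1 c"
  define D2 where "D2 = divided_diff (\<lambda>z. E z mu2) u1 c"
  define D2' where "D2' = divided_diff (\<lambda>z. E z mu2) u2 c"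
  have A: "0 \<le> A"
    using a norm_ge_zero order_trans by blast
  have mu2_near: "cmod (mu2 - d) \<le> r"
    using mu by (simp add: dist_norm norm_minus_commute)
  have "(mu1 - d) * (a1 * D1) - (mu2 - d) * (a2 * D2')
    = (mu1 - mu2) * (a1 * D1) + (mu2 - d) * (a1 * D1 - a2 * D2) + (mu2 - d) * (a2 * (D2 - D2'))"
    by (simp add: algebra_simps)
  also have "cmod \<dots> \<le> cmod ((mu1 - mu2) * (a1 * D1)) + cmod ((mu2 - d) * (a1 * D1 - a2 * D2))
      + cmod ((mu2 - d) * (a2 * (D2 - D2')))"
    by (rule order_trans[OF norm_triangle_ineq add_right_mono[OF norm_triangle_ineq]])
  also have "\<dots> = cmod (mu1 - mu2) * cmod (a1 * D1) + cmod (mu2 - d) * cmod (a1 * D1 - a2 * D2)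
      + cmod (mu2 - d) * cmod (a2 * (D2 - D2'))"
    by (simp only: norm_mult)
  also have "\<dots> \<le> dk * (A * (V / (2 * r))) + r * (\<kappa> * V * dk / (2 * r)) + X * (A * (V / (2 * r * r) * cmod (u1 - u2)))"
  proof (intro add_mono mult_mono)
    show "cmod (a1 * D1) \<le> A * (V / (2 * r))"
      unfolding norm_mult D1_def
      by (intro mult_mono a divided_diff_le) (use mu u A mem_cball_radius in auto)
    have "a1 * D1 - a2 * D2 = divided_diff (\<lambda>z. a1 * E z mu1 - a2 * E z mu2) u1 c"
      unfolding D1_def D2_def by (rule divided_diff_linear[symmetric]) (rule holomorphic_fst)+
    then show "cmod (a1 * D1 - a2 * D2) \<le> \<kappa> * V * dk / (2 * r)"
      unfolding \<kappa>_def dk_def using divided_diff_lincomb_le mu u a mem_cball_radius by auto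
    show "cmod (a2 * (D2 - D2')) \<le> A * (V / (2 * r * r) * cmod (u1 - u2))"
      unfolding norm_mult D2_def D2'_def
      by (intro mult_mono a divided_diff_lipschitz_fst) (use mu u A mem_cball_radius in auto)
  qed (use mu2_near X order_trans[OF norm_ge_zero X] dk_def A bound_nonneg radius_pos in auto)
  also have "\<dots> = (A / (2 * r) + \<kappa> / 2) * (V * dk) + A / (2 * r * r) * (V * (X * cmod (u1 - u2)))"
    using radius_pos by (simp add: field_simps)
  also have "\<dots> \<le> (A / (2 * r) + \<kappa> / 2 + A / (2 * r * r)) * (V * dk + V * (X * cmod (u1 - u2)))"
    using A radius_pos bound_nonneg order_trans[OF norm_ge_zero X]
    by (intro add_mult_le_sum_mult_add) (auto simp: \<kappa>_def dk_def)
  also have "\<dots> = (A / (2 * r) + \<kappa> / 2 + A / (2 * r * r)) * V * (dk + X * cmod (u1 - u2))"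
    by (simp add: algebra_simps add_divide_distrib)
  finally show ?thesis
    unfolding \<kappa>_def dk_def D1_def D2'_def .
qed

lemma diff_entry01_le:
  assumes mu: "mu1 \<in> cball d r" "mu2 \<in> cball d r" and a: "cmod a2 \<le> A" "cmod aT \<le> A"
    and u: "u1 \<in> cball c r" "u2 \<in> cball c r" and X: "cmod (mu2 - d) + cmod (a2 - aT) \<le> X"
  shows "cmod ((a1 * divided_diff (\<lambda>z. E z mu1) u1 c - aT * divided_diff (\<lambda>z. E z d) u1 c)
      - (a2 * divided_diff (\<lambda>z. E z mu2) u2 c - aT * divided_diff (\<lambda>z. E z d) u2 c))
    \<le> ((1 + A / (2 * r)) / (2 * r) + (1 + A / (2 * r)) / (2 * r * r)) * V
      * (cmod (mu1 - mu2) + cmod (a1 - a2) + X * cmod (u1 - u2))"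
proof -
  define \<kappa> where "\<kappa> = 1 + A / (2 * r)"
  define G1 where "G1 = (\<lambda>z. a1 * E z mu1 - a2 * E z mu2)"
  define G2 where "G2 = (\<lambda>z. a2 * E z mu2 - aT * E z d)"
  have "0 \<le> A"
    using a norm_ge_zero order_trans by blast
  then have "0 \<le> \<kappa>"
    using radius_pos unfolding \<kappa>_def by simp
  have lin: "divided_diff G1 v c = a1 * divided_diff (\<lambda>z. E z mu1) v c - a2 * divided_diff (\<lambda>z. E z mu2) v c"
    "divided_diff G2 v c = a2 * divided_diff (\<lambda>z. E z mu2) v c - aT * divided_diff (\<lambda>z. E z d) v c" for v
    unfolding G1_def G2_def by (rule divided_diff_linear, (rule holomorphic_fst)+)+
  have "(a1 * divided_diff (\<lambda>z. E z mu1) u1 c - aT * divided_diff (\<lambda>z. E z d) u1 c)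
      - (a2 * divided_diff (\<lambda>z. E z mu2) u2 c - aT * divided_diff (\<lambda>z. E z d) u2 c)
    = divided_diff G1 u1 c + (divided_diff G2 u1 c - divided_diff G2 u2 c)"
    unfolding lin by (simp add: algebra_simps)
  also have "cmod \<dots> \<le> cmod (divided_diff G1 u1 c) + cmod (divided_diff G2 u1 c - divided_diff G2 u2 c)"
    by (rule norm_triangle_ineq)
  also have "\<dots> \<le> \<kappa> * V * (cmod (mu1 - mu2) + cmod (a1 - a2)) / (2 * r)
      + \<kappa> * V * X / (2 * r * r) * cmod (u1 - u2)"
  proof (rule add_mono)
    show "cmod (divided_diff G1 u1 c) \<le> \<kappa> * V * (cmod (mu1 - mu2) + cmod (a1 - a2)) / (2 * r)"
      unfolding G1_def \<kappa>_def by (rule divided_diff_lincomb_le) (use mu a u mem_cball_radius in auto)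
    have "cmod (divided_diff G2 u1 c - divided_diff G2 u2 c)
      \<le> \<kappa> * V * (cmod (mu2 - d) + cmod (a2 - aT)) / (2 * r * r) * cmod (u1 - u2)"
      unfolding G2_def \<kappa>_def by (rule divided_diff_lincomb_lipschitz) (use mu a u mem_cball_radius in auto)
    also have "\<dots> \<le> \<kappa> * V * X / (2 * r * r) * cmod (u1 - u2)"
      using X \<open>0 \<le> \<kappa>\<close> bound_nonneg radius_pos
      by (intro mult_right_mono divide_right_mono mult_left_mono) auto
    finally show "cmod (divided_diff G2 u1 c - divided_diff G2 u2 c) \<le> \<kappa> * V * X / (2 * r * r) * cmod (u1 - u2)" .
  qed
  also have "\<dots> = \<kappa> / (2 * r) * (V * (cmod (mu1 - mu2) + cmod (a1 - a2)))
      + \<kappa> / (2 * r * r) * (V * (X * cmod (u1 - u2)))"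
    by simp
  also have "\<dots> \<le> (\<kappa> / (2 * r) + \<kappa> / (2 * r * r)) * (V * (cmod (mu1 - mu2) + cmod (a1 - a2)) + V * (X * cmod (u1 - u2)))"
    using \<open>0 \<le> \<kappa>\<close> radius_pos bound_nonneg order_trans[OF _ X]
    by (intro add_mult_le_sum_mult_add) auto
  also have "\<dots> = (\<kappa> / (2 * r) + \<kappa> / (2 * r * r)) * V * (cmod (mu1 - mu2) + cmod (a1 - a2) + X * cmod (u1 - u2))"
    by (simp add: algebra_simps add_divide_distrib)
  finally show ?thesis
    unfolding \<kappa>_def .
qed

lemma diff_entry10_le:
  assumes mu: "mu1 \<in> cball d r" "mu2 \<in> cball d r" and a: "cmod a1 \<le> A" "cmod a2 \<le> A"
  shows "cmod ((mu1 - d) * (a1 * E c mu1) - (mu2 - d) * (a2 * E c mu2))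
    \<le> (A + r * (1 + A / (2 * r))) * V * (cmod (mu1 - mu2) + cmod (a1 - a2))"
proof -
  define dk where "dk = cmod (mu1 - mu2) + cmod (a1 - a2)"
  have A: "0 \<le> A"
    using a norm_ge_zero order_trans by blast
  have "(mu1 - d) * (a1 * E c mu1) - (mu2 - d) * (a2 * E c mu2)
    = (mu1 - mu2) * (a1 * E c mu1) + (mu2 - d) * (a1 * E c mu1 - a2 * E c mu2)"
    by (simp add: algebra_simps)
  also have "cmod \<dots> \<le> cmod (mu1 - mu2) * cmod (a1 * E c mu1) + cmod (mu2 - d) * cmod (a1 * E c mu1 - a2 * E c mu2)"
    by (metis norm_mult norm_triangle_ineq)
  also have "\<dots> \<le> dk * (A * V) + r * ((1 + A / (2 * r)) * V * dk)"
  proof (intro add_mono mult_mono)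
    show "cmod (a1 * E c mu1) \<le> A * V"
      unfolding norm_mult by (intro mult_mono a bounded) (use mu A mem_cball_radius in auto)
    show "cmod (a1 * E c mu1 - a2 * E c mu2) \<le> (1 + A / (2 * r)) * V * dk"
      unfolding dk_def by (rule lincomb_diff_le) (use mu a mem_cball_radius in auto)
    show "cmod (mu2 - d) \<le> r"
      using mu by (simp add: dist_norm norm_minus_commute)
  qed (use dk_def A bound_nonneg radius_pos in auto)
  also have "\<dots> = (A + r * (1 + A / (2 * r))) * V * dk"
    by (simp add: algebra_simps)
  finally show ?thesis
    unfolding dk_def .
qed

lemma diff_entry11_le:
  assumes mu: "mu1 \<in> cball d r" "mu2 \<in> cball d r" and a: "cmod a2 \<le> A"
  shows "cmod ((a1 * E c mu1 - aT * E c d) - (a2 * E c mu2 - aT * E c d))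
    \<le> (1 + A / (2 * r)) * V * (cmod (mu1 - mu2) + cmod (a1 - a2))"
  using lincomb_diff_le[of c mu1 mu2 a2 A a1] assms mem_cball_radius by simp

lemma row_diff_le:
  assumes mu: "mu1 \<in> cball d r" "mu2 \<in> cball d r"
    and a: "cmod a1 \<le> A" "cmod a2 \<le> A" "cmod aT \<le> A"
    and u: "u1 \<in> cball c r" "u2 \<in> cball c r" and X: "cmod (mu2 - d) + cmod (a2 - aT) \<le> X"
  defines "P \<equiv> V * (cmod (mu1 - mu2) + cmod (a1 - a2) + X * cmod (u1 - u2))"
  shows "cmod ((mu1 - d) * (a1 * divided_diff (\<lambda>z. E z mu1) u1 c)
        - (mu2 - d) * (a2 * divided_diff (\<lambda>z. E z mu2) u2 c))
      + cmod ((a1 * divided_diff (\<lambda>z. E z mu1) u1 c - aT * divided_diff (\<lambda>z. E z d) u1 c)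
        - (a2 * divided_diff (\<lambda>z. E z mu2) u2 c - aT * divided_diff (\<lambda>z. E z d) u2 c))
      \<le> row_const r A * P"
    and "cmod ((mu1 - d) * (a1 * E c mu1) - (mu2 - d) * (a2 * E c mu2))
      + cmod ((a1 * E c mu1 - aT * E c d) - (a2 * E c mu2 - aT * E c d))
      \<le> row_const r A * P"
proof -
  define \<kappa> where "\<kappa> = 1 + A / (2 * r)"
  have "0 \<le> A"
    using a norm_ge_zero order_trans by blast
  then have coeffs: "0 \<le> A / (2 * r) + \<kappa> / 2 + A / (2 * r * r)" "0 \<le> \<kappa> / (2 * r) + \<kappa> / (2 * r * r)"
    "0 \<le> A + r * \<kappa>" "0 \<le> \<kappa>"
    using radius_pos by (simp_all add: \<kappa>_def)
  have "cmod (mu2 - d) \<le> X"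
    using X by (meson le_add_same_cancel1 norm_ge_zero order_trans)
  then have "0 \<le> X"
    using norm_ge_zero order_trans by blast
  then have "V * (cmod (mu1 - mu2) + cmod (a1 - a2)) \<le> P" "0 \<le> P"
    using bound_nonneg by (simp_all add: P_def distrib_left)
  have const: "row_const r A = (A / (2 * r) + \<kappa> / 2 + A / (2 * r * r)) + (\<kappa> / (2 * r) + \<kappa> / (2 * r * r))
      + ((A + r * \<kappa>) + \<kappa>)"
    unfolding row_const_def Let_def \<kappa>_def[symmetric] by (simp only: add.assoc)
  define e00 where "e00 = cmod ((mu1 - d) * (a1 * divided_diff (\<lambda>z. E z mu1) u1 c)
        - (mu2 - d) * (a2 * divided_diff (\<lambda>z. E z mu2) u2 c))"
  define e01 where "e01 = cmod ((a1 * divided_diff (\<lambda>z. E z mu1) u1 c - aT * divided_diff (\<lambda>z. E z d) u1 c)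
        - (a2 * divided_diff (\<lambda>z. E z mu2) u2 c - aT * divided_diff (\<lambda>z. E z d) u2 c))"
  define e10 where "e10 = cmod ((mu1 - d) * (a1 * E c mu1) - (mu2 - d) * (a2 * E c mu2))"
  define e11 where "e11 = cmod ((a1 * E c mu1 - aT * E c d) - (a2 * E c mu2 - aT * E c d))"
  have "e00 \<le> (A / (2 * r) + \<kappa> / 2 + A / (2 * r * r)) * P"
    using diff_entry00_le[OF mu a(1,2) u \<open>cmod (mu2 - d) \<le> X\<close>]
    unfolding e00_def P_def \<kappa>_def by (simp only: mult.assoc)
  moreover have "e01 \<le> (\<kappa> / (2 * r) + \<kappa> / (2 * r * r)) * P"
    using diff_entry01_le[OF mu a(2,3) u X, of a1] unfolding e01_def P_def \<kappa>_def by (simp only: mult.assoc)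
  ultimately have "e00 + e01 \<le> ((A / (2 * r) + \<kappa> / 2 + A / (2 * r * r)) + (\<kappa> / (2 * r) + \<kappa> / (2 * r * r))) * P"
    by (simp add: distrib_right)
  also have "\<dots> \<le> row_const r A * P"
    unfolding const using \<open>0 \<le> P\<close> coeffs by (intro mult_right_mono) auto
  finally show "e00 + e01 \<le> row_const r A * P" .
  have "e10 \<le> (A + r * \<kappa>) * (V * (cmod (mu1 - mu2) + cmod (a1 - a2)))"
    "e11 \<le> \<kappa> * (V * (cmod (mu1 - mu2) + cmod (a1 - a2)))"
    using diff_entry10_le[OF mu a(1,2)] diff_entry11_le[OF mu a(2), of a1 aT]
    unfolding e10_def e11_def \<kappa>_def by (simp_all only: mult.assoc)
  then have "e10 + e11 \<le> ((A + r * \<kappa>) + \<kappa>) * (V * (cmod (mu1 - mu2) + cmod (a1 - a2)))"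
    by (simp add: distrib_right)
  also have "\<dots> \<le> row_const r A * P"
    unfolding const using \<open>V * (cmod (mu1 - mu2) + cmod (a1 - a2)) \<le> P\<close> coeffs bound_nonneg
    by (intro mult_mono) auto
  finally show "e10 + e11 \<le> row_const r A * P" .
qed

end

section \<open>Square-summable sequences\<close>

lemma summable_mult_square_summable:
  fixes u w :: "nat \<Rightarrow> real"
  assumes "summable (\<lambda>k. (u k)\<^sup>2)" "summable (\<lambda>k. (w k)\<^sup>2)"
  shows "summable (\<lambda>k. u k * w k)"
proof (rule summable_comparison_test)
  show "summable (\<lambda>k. ((u k)\<^sup>2 + (w k)\<^sup>2) / 2)"
    by (intro summable_divide summable_add assms)
  show "\<exists>N. \<forall>k\<ge>N. norm (u k * w k) \<le> ((u k)\<^sup>2 + (w k)\<^sup>2) / 2"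
    using sum_squares_ge_zero[of "\<bar>u k\<bar> - \<bar>w k\<bar>" 0 for k]
    by (auto simp: abs_mult power2_eq_square algebra_simps)
qed

lemma suminf_mult_le_sqrt_suminf:
  fixes u w :: "nat \<Rightarrow> real"
  assumes u: "summable (\<lambda>k. (u k)\<^sup>2)" and w: "summable (\<lambda>k. (w k)\<^sup>2)"
  shows "(\<Sum>k. u k * w k) \<le> sqrt (\<Sum>k. (u k)\<^sup>2) * sqrt (\<Sum>k. (w k)\<^sup>2)"
proof (rule suminf_le_const[OF summable_mult_square_summable[OF u w]])
  fix N
  have "(\<Sum>k<N. u k * w k)\<^sup>2 \<le> (\<Sum>k<N. (u k)\<^sup>2) * (\<Sum>k<N. (w k)\<^sup>2)"
    by (rule Cauchy_Schwarz_ineq_sum)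
  also have "\<dots> \<le> (\<Sum>k. (u k)\<^sup>2) * (\<Sum>k. (w k)\<^sup>2)"
    using u w by (intro mult_mono sum_le_suminf suminf_nonneg sum_nonneg) auto
  finally show "(\<Sum>k<N. u k * w k) \<le> sqrt (\<Sum>k. (u k)\<^sup>2) * sqrt (\<Sum>k. (w k)\<^sup>2)"
    by (simp add: real_le_rsqrt flip: real_sqrt_mult)
qed

lemma suminf_weighted_le:
  fixes w u v :: "nat \<Rightarrow> real"
  assumes w: "summable (\<lambda>k. (w k)\<^sup>2)" and u: "summable (\<lambda>k. (u k)\<^sup>2)"
    and v: "summable (\<lambda>k. (v k)\<^sup>2)" and "0 \<le> t"
  shows "summable (\<lambda>k. w k * (u k + t * v k))"
    and "(\<Sum>k. w k * (u k + t * v k)) \<le> sqrt (\<Sum>k. (w k)\<^sup>2) * (sqrt (\<Sum>k. (u k)\<^sup>2) + t * sqrt (\<Sum>k. (v k)\<^sup>2))"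
proof -
  have wu: "summable (\<lambda>k. w k * u k)" and wv: "summable (\<lambda>k. t * (w k * v k))"
    using summable_mult_square_summable[OF w u] summable_mult_square_summable[OF w v] by auto
  have eq: "(\<lambda>k. w k * (u k + t * v k)) = (\<lambda>k. w k * u k + t * (w k * v k))"
    by (simp add: algebra_simps)
  show "summable (\<lambda>k. w k * (u k + t * v k))"
    unfolding eq by (intro summable_add wu wv)
  have "(\<Sum>k. w k * (u k + t * v k)) = (\<Sum>k. w k * u k) + t * (\<Sum>k. w k * v k)"
    unfolding eq suminf_add[OF wu wv, symmetric]
    using suminf_mult[OF summable_mult_square_summable[OF w v]] by simp
  also have "\<dots> \<le> sqrt (\<Sum>k. (w k)\<^sup>2) * sqrt (\<Sum>k. (u k)\<^sup>2) + t * (sqrt (\<Sum>k. (w k)\<^sup>2) * sqrt (\<Sum>k. (v k)\<^sup>2))"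
    using \<open>0 \<le> t\<close> by (intro add_mono mult_left_mono suminf_mult_le_sqrt_suminf w u v)
  finally show "(\<Sum>k. w k * (u k + t * v k)) \<le> sqrt (\<Sum>k. (w k)\<^sup>2) * (sqrt (\<Sum>k. (u k)\<^sup>2) + t * sqrt (\<Sum>k. (v k)\<^sup>2))"
    by (simp add: algebra_simps)
qed

lemma abs_le_sqrt_suminf_power2:
  fixes f :: "nat \<Rightarrow> real"
  assumes "summable (\<lambda>k. (f (Suc k))\<^sup>2)" "1 \<le> n"
  shows "\<bar>f n\<bar> \<le> sqrt (\<Sum>k. (f (Suc k))\<^sup>2)"
proof -
  obtain m where "n = Suc m"
    using assms(2) by (cases n) auto
  then have "(f n)\<^sup>2 \<le> (\<Sum>k. (f (Suc k))\<^sup>2)"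
    using sum_le_suminf[OF assms(1), of "{m}"] by simp
  then show ?thesis
    by (simp add: real_le_rsqrt flip: real_sqrt_abs)
qed

lemma summable_inverse_one_plus_power2: "summable (\<lambda>i. 1 / (1 + real i)\<^sup>2)"
proof -
  have "summable (\<lambda>i. inverse (real (Suc i) ^ 2))"
    using inverse_power_summable[of 2, where 'a = real] by (subst summable_Suc_iff) simp
  then show ?thesis
    by (simp add: field_simps)
qed

lemma sum_inverse_one_plus_dist_le:
  "(\<Sum>j<N. (1 / (1 + \<bar>real m - real j\<bar>))\<^sup>2) \<le> 2 * (\<Sum>i. 1 / (1 + real i)\<^sup>2)"
proof -
  define h :: "nat \<Rightarrow> real" where "h i = 1 / (1 + real i)\<^sup>2" for i
  have le: "sum h I \<le> suminf h" if "finite I" for I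
    using summable_inverse_one_plus_power2 that unfolding h_def by (intro sum_le_suminf) auto
  define L where "L = {j. j < N \<and> j \<le> m}"
  define R where "R = {j. j < N \<and> m < j}"
  have "{..<N} = L \<union> R"
    by (auto simp: L_def R_def)
  then have "(\<Sum>j<N. (1 / (1 + \<bar>real m - real j\<bar>))\<^sup>2)
      = (\<Sum>j\<in>L. (1 / (1 + \<bar>real m - real j\<bar>))\<^sup>2) + (\<Sum>j\<in>R. (1 / (1 + \<bar>real m - real j\<bar>))\<^sup>2)"
    by (simp add: sum.union_disjoint L_def R_def disjoint_iff)
  also have "\<dots> = (\<Sum>j\<in>L. h (m - j)) + (\<Sum>j\<in>R. h (j - m))"
    by (intro arg_cong2[where f = "(+)"] sum.cong) (auto simp: L_def R_def h_def power_divide)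
  also have "\<dots> = sum h ((\<lambda>j. m - j) ` L) + sum h ((\<lambda>j. j - m) ` R)"
    by (subst (1 2) sum.reindex) (auto simp: inj_on_def L_def R_def)
  also have "\<dots> \<le> suminf h + suminf h"
    by (intro add_mono le) (auto simp: L_def R_def)
  finally show ?thesis
    by (simp add: h_def[abs_def])
qed

lemma sum_inverse_one_plus_dist_shift_le:
  "(\<Sum>k<N. (1 / (1 + \<bar>real m - real (k - p)\<bar>))\<^sup>2) \<le> real p + 2 * (\<Sum>i. 1 / (1 + real i)\<^sup>2)"
proof -
  define f :: "nat \<Rightarrow> real" where "f k = (1 / (1 + \<bar>real m - real (k - p)\<bar>))\<^sup>2" for k
  have f_le_1: "f k \<le> 1" for k
    by (simp add: f_def power_le_one)
  have "(\<Sum>k<N. f k) \<le> (\<Sum>k<p + N. f k)"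
    by (rule sum_mono2) (auto simp: f_def)
  also have "\<dots> = (\<Sum>k<p. f k) + (\<Sum>k<N. f (k + p))"
    using sum.shift_bounds_nat_ivl[of f 0 p N] sum.atLeastLessThan_concat[of 0 p "N + p" f]
    by (simp add: atLeast0LessThan[symmetric] add.commute)
  also have "\<dots> \<le> real p + 2 * (\<Sum>i. 1 / (1 + real i)\<^sup>2)"
  proof (rule add_mono)
    show "(\<Sum>k<p. f k) \<le> real p"
      using sum_mono[of "{..<p}" f "\<lambda>_. 1"] f_le_1 by simp
    show "(\<Sum>k<N. f (k + p)) \<le> 2 * (\<Sum>i. 1 / (1 + real i)\<^sup>2)"
      using sum_inverse_one_plus_dist_le[of m N] by (simp add: f_def)
  qed
  finally show ?thesis
    by (simp add: f_def)
qed

section \<open>The data of the theorem\<close>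

lemma rhoT_eq: "rhoT p n = of_real (real (n - Suc p))"
  by (simp add: rhoT_def)

lemma lam_eq_rho_power2: "lam S k = (rho S k)\<^sup>2"
  by (simp add: rho_def sqrtb_def)

lemma sum_lessThan_2: "(\<Sum>l<(2::nat). f l) = f 0 + (f 1 :: 'a :: comm_monoid_add)"
  by (simp add: numeral_2_eq_2)

text \<open>The two cases \<open>rho^_n \<noteq> 0\<close> and \<open>rho^_n = 0\<close> of the definition of \<open>H\<close> are the
  two cases of one divided difference.\<close>

lemma Hm_eq:
  assumes "0 \<le> x"
  shows "Hm p S x n k i j =
    (if i = 0 then
       (if j = 0 then (rho S k - rhoT p k) * (alph S k * divided_diff (\<lambda>z. int_cos_cos x z (rho S k)) (rho S n) (rhoT p n))
        else alph S k * divided_diff (\<lambda>z. int_cos_cos x z (rho S k)) (rho S n) (rhoT p n)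
          - alphT p k * divided_diff (\<lambda>z. int_cos_cos x z (rhoT p k)) (rho S n) (rhoT p n))
     else
       (if j = 0 then (rho S k - rhoT p k) * (alph S k * int_cos_cos x (rhoT p n) (rho S k))
        else alph S k * int_cos_cos x (rhoT p n) (rho S k) - alphT p k * int_cos_cos x (rhoT p n) (rhoT p k)))"
proof -
  have Qt: "Qt p S x n i k j = alph_i p S k j * int_cos_cos x (rho_i p S n i) (rho_i p S k j)" for i j
    using assms by (simp add: Qt_def tD_power2_eq_int_cos_cos)
  show ?thesis
  proof (cases "rhohat p S n = 0")
    case True
    then have eq: "rho S n = rhoT p n"
      by (simp add: rhohat_def)
    have deriv_cmult: "deriv (\<lambda>z. a * int_cos_cos x z w) u = a * deriv (\<lambda>z. int_cos_cos x z w) u"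
      for a w u
      using int_cos_cos_holomorphic(1)[of x w UNIV]
      by (intro deriv_cmult) (auto simp: holomorphic_on_def field_differentiable_at_within)
    have f: "(\<lambda>r. alph_i p S k 0 * tD x (r\<^sup>2) (lam_i p S k 0)) = (\<lambda>r. alph S k * int_cos_cos x r (rho S k))"
      "(\<lambda>r. alph_i p S k 1 * tD x (r\<^sup>2) (lam_i p S k 1)) = (\<lambda>r. alphT p k * int_cos_cos x r (rhoT p k))"
      using assms
      by (simp_all add: fun_eq_iff lam_i_def alph_i_def lam_eq_rho_power2 lamT_def tD_power2_eq_int_cos_cos)
    show ?thesis
      using True unfolding Hm_def f deriv_cmult
      by (simp add: mmult2_def mat2_def sum_lessThan_2 Tinv_def Qt rho_i_def alph_i_def eq
          divided_diff_def rhohat_def algebra_simps)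
  next
    case False
    then have "rho S n - rhoT p n \<noteq> 0" "rho S n \<noteq> rhoT p n"
      by (simp_all add: rhohat_def)
    then show ?thesis
      using False unfolding Hm_def
      by (simp add: mmult2_def mat2_def sum_lessThan_2 Tinv_def Tm_def Qm_def Qt rho_i_def alph_i_def
          divided_diff_def rhohat_def diff_divide_distrib algebra_simps)
  qed
qed

lemma psiT_eq: "psiT p S n 0 x = divided_diff (\<lambda>z. cos (z * of_real x)) (rho S n) (rhoT p n)"
proof (cases "rhohat p S n = 0")
  case True
  have "deriv (\<lambda>z. cos (z * of_real x)) (rhoT p n) = - of_real x * sin (rhoT p n * of_real x)"
    by (rule DERIV_imp_deriv) (auto intro!: derivative_eq_intros)
  then show ?thesis
    using True by (simp add: psiT_def divided_diff_def rhohat_def rho_i_def)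
next
  case False
  then show ?thesis
    by (simp add: psiT_def divided_diff_def rhohat_def rho_i_def mvmult2_def sum_lessThan_2 Tm_def
        mat2_def phiT_def diff_divide_distrib)
qed

definition model_weight :: "nat \<Rightarrow> nat \<Rightarrow> nat \<Rightarrow> real" where
  "model_weight p n k = 1 / (1 + \<bar>real (n - Suc p) - real (k - Suc p)\<bar>)"

lemma model_weight_partial_sum_le:
  "(\<Sum>k<N. (model_weight p n (Suc k))\<^sup>2) \<le> real p + 2 * (\<Sum>i. 1 / (1 + real i)\<^sup>2)"
  using sum_inverse_one_plus_dist_shift_le[where N = N and m = "n - Suc p" and p = p]
  by (simp add: model_weight_def)

lemma model_weight_square_summable: "summable (\<lambda>k. (model_weight p n (Suc k))\<^sup>2)"
proof (rule bounded_imp_summable)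
  show "(\<Sum>k\<le>N. (model_weight p n (Suc k))\<^sup>2) \<le> real p + 2 * (\<Sum>i. 1 / (1 + real i)\<^sup>2)" for N
    using model_weight_partial_sum_le[where N = "Suc N"] by (simp add: lessThan_Suc_atMost)
qed simp

lemma model_weight_suminf_le:
  "(\<Sum>k. (model_weight p n (Suc k))\<^sup>2) \<le> real p + 2 * (\<Sum>i. 1 / (1 + real i)\<^sup>2)"
  by (rule suminf_le_const[OF model_weight_square_summable model_weight_partial_sum_le])

lemma bidisc_kernel_int_cos_cos:
  assumes "0 \<le> x" "x \<le> pi" "0 < r"
  shows "bidisc_kernel (int_cos_cos x) (rhoT p n) (rhoT p k) r (decay_const r * model_weight p n k)"
proof
  fix z w
  assume "z \<in> cball (rhoT p n) (4 * r)" "w \<in> cball (rhoT p k) (4 * r)"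
  then show "cmod (int_cos_cos x z w) \<le> decay_const r * model_weight p n k"
    using norm_int_cos_cos_le[of x r "real (n - Suc p)" "real (k - Suc p)" z w] assms
    by (simp add: rhoT_eq model_weight_def)
qed (use assms int_cos_cos_holomorphic in auto)

lemma inBall_xi_le:
  assumes "inBall p \<Omega> S" "1 \<le> n"
  shows "xi p S n \<le> \<Omega>"
  using abs_le_sqrt_suminf_power2[of "xi p S" n] assms by (auto simp: inBall_def)

lemma inBall_rho_mem_cball:
  assumes "inBall p \<Omega> S" "1 \<le> n"
  shows "rho S n \<in> cball (rhoT p n) \<Omega>"
proof -
  have "cmod (rho S n - rhoT p n) \<le> xi p S n"
    by (simp add: xi_def)
  then show ?thesis
    using inBall_xi_le[OF assms] by (simp add: dist_norm norm_minus_commute)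
qed

lemma norm_alphT_le: "cmod (alphT p k) \<le> 1"
  using pi_gt3 by (auto simp: alphT_def norm_divide)

lemma inBall_norm_alph_le:
  assumes "inBall p \<Omega> S" "1 \<le> n"
  shows "cmod (alph S n) \<le> 1 + \<Omega>"
proof -
  have "cmod (alph S n) \<le> cmod (alphT p n) + cmod (alph S n - alphT p n)"
    by (rule norm_triangle_sub)
  moreover have "cmod (alph S n - alphT p n) \<le> xi p S n"
    by (simp add: xi_def)
  ultimately show ?thesis
    using inBall_xi_le[OF assms] norm_alphT_le[of p n] by linarith
qed

lemma delta_nonneg: "0 \<le> delta S1 S2 n"
  by (simp add: delta_def)

lemma delta_le_xi_add: "delta S1 S2 n \<le> xi p S1 n + xi p S2 n"
  using norm_triangle_ineq4[of "rho S1 n - rhoT p n" "rho S2 n - rhoT p n"]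
    norm_triangle_ineq4[of "alph S1 n - alphT p n" "alph S2 n - alphT p n"]
  by (simp add: delta_def xi_def norm_minus_commute)

lemma summable_delta_power2:
  assumes "inBall p \<Omega> S1" "inBall p \<Omega> S2"
  shows "summable (\<lambda>k. (delta S1 S2 (Suc k))\<^sup>2)"
proof (rule summable_comparison_test)
  show "summable (\<lambda>k. 2 * (xi p S1 (Suc k))\<^sup>2 + 2 * (xi p S2 (Suc k))\<^sup>2)"
    using assms by (intro summable_add summable_mult) (auto simp: inBall_def)
  have "(delta S1 S2 n)\<^sup>2 \<le> 2 * (xi p S1 n)\<^sup>2 + 2 * (xi p S2 n)\<^sup>2" for n
  proof -
    have "(delta S1 S2 n)\<^sup>2 \<le> (xi p S1 n + xi p S2 n)\<^sup>2"
      by (intro power_mono delta_le_xi_add) (simp add: delta_def)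
    also have "\<dots> \<le> 2 * (xi p S1 n)\<^sup>2 + 2 * (xi p S2 n)\<^sup>2"
      using sum_squares_ge_zero[of "xi p S1 n - xi p S2 n" 0]
      by (simp add: power2_eq_square algebra_simps)
    finally show ?thesis .
  qed
  then show "\<exists>N. \<forall>n\<ge>N. norm ((delta S1 S2 (Suc n))\<^sup>2) \<le> 2 * (xi p S1 (Suc n))\<^sup>2 + 2 * (xi p S2 (Suc n))\<^sup>2"
    by simp
qed

lemma delta_le_Zd:
  assumes "inBall p \<Omega> S1" "inBall p \<Omega> S2" "1 \<le> n"
  shows "delta S1 S2 n \<le> Zd S1 S2"
  using abs_le_sqrt_suminf_power2[OF summable_delta_power2[OF assms(1,2)] assms(3)]
  by (simp add: Zd_def)

lemma row_const_nonneg: "0 < r \<Longrightarrow> 0 \<le> A \<Longrightarrow> 0 \<le> row_const r A"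
  by (simp add: row_const_def Let_def)

lemma Hm_row_diff_le:
  assumes "0 < \<Omega>" and S: "inBall p \<Omega> S1" "inBall p \<Omega> S2" and x: "0 \<le> x" "x \<le> pi"
    and "1 \<le> n" "1 \<le> k"
  shows "cmod (Hm p S1 x n k i 0 - Hm p S2 x n k i 0) + cmod (Hm p S1 x n k i 1 - Hm p S2 x n k i 1)
    \<le> row_const \<Omega> (1 + \<Omega>) * (decay_const \<Omega> * model_weight p n k)
      * (delta S1 S2 k + xi p S2 k * delta S1 S2 n)"
proof -
  interpret bidisc_kernel "int_cos_cos x" "rhoT p n" "rhoT p k" \<Omega> "decay_const \<Omega> * model_weight p n k"
    by (rule bidisc_kernel_int_cos_cos[OF x \<open>0 < \<Omega>\<close>])
  have aT: "cmod (alphT p k) \<le> 1 + \<Omega>"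
    using norm_alphT_le[of p k] \<open>0 < \<Omega>\<close> by simp
  have X: "cmod (rho S2 k - rhoT p k) + cmod (alph S2 k - alphT p k) \<le> xi p S2 k"
    by (simp add: xi_def)
  note row = row_diff_le[OF inBall_rho_mem_cball[OF S(1) \<open>1 \<le> k\<close>] inBall_rho_mem_cball[OF S(2) \<open>1 \<le> k\<close>]
      inBall_norm_alph_le[OF S(1) \<open>1 \<le> k\<close>] inBall_norm_alph_le[OF S(2) \<open>1 \<le> k\<close>] aT
      inBall_rho_mem_cball[OF S(1) \<open>1 \<le> n\<close>] inBall_rho_mem_cball[OF S(2) \<open>1 \<le> n\<close>] X]
  have "0 \<le> row_const \<Omega> (1 + \<Omega>) * (decay_const \<Omega> * model_weight p n k)"
    using \<open>0 < \<Omega>\<close> bound_nonneg row_const_nonneg[of \<Omega> "1 + \<Omega>"] by simp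
  then have "row_const \<Omega> (1 + \<Omega>) * (decay_const \<Omega> * model_weight p n k)
      * (delta S1 S2 k + xi p S2 k * cmod (rho S1 n - rho S2 n))
    \<le> row_const \<Omega> (1 + \<Omega>) * (decay_const \<Omega> * model_weight p n k)
      * (delta S1 S2 k + xi p S2 k * delta S1 S2 n)"
    by (intro mult_left_mono add_left_mono) (auto simp: delta_def xi_def)
  then show ?thesis
    using row x unfolding delta_def[of S1 S2 k] by (auto simp: Hm_eq intro: order_trans)
qed

lemma Hm_series_term_le:
  assumes "0 < \<Omega>" and S: "inBall p \<Omega> S1" "inBall p \<Omega> S2" and x: "0 \<le> x" "x \<le> pi"
    and "1 \<le> n" "1 \<le> k" and a: "\<And>j. j < 2 \<Longrightarrow> cmod (a j) \<le> B"
  shows "cmod (\<Sum>j<2. (Hm p S1 x n k i j - Hm p S2 x n k i j) * a j)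
    \<le> B * (row_const \<Omega> (1 + \<Omega>) * decay_const \<Omega>)
      * (model_weight p n k * (delta S1 S2 k + delta S1 S2 n * xi p S2 k))"
proof -
  let ?h = "\<lambda>j. Hm p S1 x n k i j - Hm p S2 x n k i j"
  have "0 \<le> B"
    using a[of 0] by (simp add: order_trans[OF norm_ge_zero])
  have "cmod (\<Sum>j<2. ?h j * a j) \<le> cmod (?h 0) * cmod (a 0) + cmod (?h 1) * cmod (a 1)"
    unfolding sum_lessThan_2 using norm_triangle_ineq[of "?h 0 * a 0" "?h 1 * a 1"] by (simp add: norm_mult)
  also have "\<dots> \<le> cmod (?h 0) * B + cmod (?h 1) * B"
    by (intro add_mono mult_left_mono a) auto
  also have "\<dots> = B * (cmod (?h 0) + cmod (?h 1))"
    by (simp add: algebra_simps)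
  also have "\<dots> \<le> B * (row_const \<Omega> (1 + \<Omega>) * (decay_const \<Omega> * model_weight p n k)
      * (delta S1 S2 k + xi p S2 k * delta S1 S2 n))"
    using Hm_row_diff_le[OF assms(1-7)] \<open>0 \<le> B\<close> by (intro mult_left_mono) auto
  also have "\<dots> = B * (row_const \<Omega> (1 + \<Omega>) * decay_const \<Omega>)
      * (model_weight p n k * (delta S1 S2 k + delta S1 S2 n * xi p S2 k))"
    by (simp add: algebra_simps)
  finally show ?thesis .
qed

definition series_const :: "nat \<Rightarrow> real \<Rightarrow> real" where
  "series_const p \<Omega> = row_const \<Omega> (1 + \<Omega>) * decay_const \<Omega>
     * sqrt (real p + 2 * (\<Sum>i. 1 / (1 + real i)\<^sup>2)) * (1 + \<Omega>)"

lemma Hm_diff_series_le: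
  fixes i :: nat
  assumes "0 < \<Omega>" and S: "inBall p \<Omega> S1" "inBall p \<Omega> S2" and x: "0 \<le> x" "x \<le> pi"
    and "1 \<le> n" and a: "\<And>k j. 1 \<le> k \<Longrightarrow> j < 2 \<Longrightarrow> cmod (a k j) \<le> B"
  defines "t \<equiv> \<lambda>k. \<Sum>j<2. (Hm p S1 x n (Suc k) i j - Hm p S2 x n (Suc k) i j) * a (Suc k) j"
  shows "summable t" "cmod (\<Sum>k. t k) \<le> series_const p \<Omega> * Zd S1 S2 * B"
proof -
  define R where "R = row_const \<Omega> (1 + \<Omega>) * decay_const \<Omega>"
  define w where "w k = model_weight p n (Suc k)" for k
  define u where "u k = delta S1 S2 (Suc k)" for k
  define v where "v k = xi p S2 (Suc k)" for k
  define g where "g k = B * R * (w k * (u k + delta S1 S2 n * v k))" for k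
  have "0 \<le> B"
    using a[of 1 0] by (simp add: order_trans[OF norm_ge_zero])
  have "0 \<le> R"
    using \<open>0 < \<Omega>\<close> row_const_nonneg[of \<Omega> "1 + \<Omega>"] by (simp add: R_def decay_const_def)
  have "0 \<le> delta S1 S2 n"
    by (simp add: delta_def)
  have sw: "summable (\<lambda>k. (w k)\<^sup>2)" and su: "summable (\<lambda>k. (u k)\<^sup>2)" and sv: "summable (\<lambda>k. (v k)\<^sup>2)"
    using model_weight_square_summable summable_delta_power2[OF S] S(2)
    by (auto simp: w_def u_def v_def inBall_def)
  have "0 \<le> (\<Sum>k. (u k)\<^sup>2)" "0 \<le> (\<Sum>k. (v k)\<^sup>2)"
    using su sv by (simp_all add: suminf_nonneg)
  then have "0 \<le> Zd S1 S2" "0 \<le> sqrt (\<Sum>k. (v k)\<^sup>2)"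
    by (simp_all add: Zd_def u_def)
  have t_le_g: "norm (t k) \<le> g k" for k
    using Hm_series_term_le[OF \<open>0 < \<Omega>\<close> S x \<open>1 \<le> n\<close>, of "Suc k" "a (Suc k)" B i] a[of "Suc k"]
    by (simp add: t_def g_def R_def w_def u_def v_def)
  have sg: "summable g"
    unfolding g_def by (intro summable_mult suminf_weighted_le(1)[OF sw su sv \<open>0 \<le> delta S1 S2 n\<close>])
  show "summable t"
    by (rule summable_comparison_test'[OF sg t_le_g])
  have "(\<Sum>k. w k * (u k + delta S1 S2 n * v k))
      \<le> sqrt (\<Sum>k. (w k)\<^sup>2) * (sqrt (\<Sum>k. (u k)\<^sup>2) + delta S1 S2 n * sqrt (\<Sum>k. (v k)\<^sup>2))"
    by (rule suminf_weighted_le(2)[OF sw su sv \<open>0 \<le> delta S1 S2 n\<close>])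
  also have "\<dots> \<le> sqrt (real p + 2 * (\<Sum>i. 1 / (1 + real i)\<^sup>2)) * (Zd S1 S2 + Zd S1 S2 * \<Omega>)"
  proof (rule mult_mono)
    show "sqrt (\<Sum>k. (w k)\<^sup>2) \<le> sqrt (real p + 2 * (\<Sum>i. 1 / (1 + real i)\<^sup>2))"
      unfolding w_def by (intro real_sqrt_le_mono model_weight_suminf_le)
    have "delta S1 S2 n * sqrt (\<Sum>k. (v k)\<^sup>2) \<le> Zd S1 S2 * \<Omega>"
      using S(2) delta_le_Zd[OF S \<open>1 \<le> n\<close>] \<open>0 \<le> Zd S1 S2\<close> \<open>0 \<le> sqrt (\<Sum>k. (v k)\<^sup>2)\<close>
      by (intro mult_mono) (auto simp: v_def inBall_def)
    then show "sqrt (\<Sum>k. (u k)\<^sup>2) + delta S1 S2 n * sqrt (\<Sum>k. (v k)\<^sup>2) \<le> Zd S1 S2 + Zd S1 S2 * \<Omega>"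
      by (simp add: u_def Zd_def)
  qed (use \<open>0 \<le> Zd S1 S2\<close> \<open>0 < \<Omega>\<close> \<open>0 \<le> (\<Sum>k. (u k)\<^sup>2)\<close> \<open>0 \<le> sqrt (\<Sum>k. (v k)\<^sup>2)\<close>
        \<open>0 \<le> delta S1 S2 n\<close> suminf_nonneg[OF summable_inverse_one_plus_power2] in simp_all)
  finally have "(\<Sum>k. w k * (u k + delta S1 S2 n * v k))
      \<le> sqrt (real p + 2 * (\<Sum>i. 1 / (1 + real i)\<^sup>2)) * (Zd S1 S2 + Zd S1 S2 * \<Omega>)" .
  then have "(\<Sum>k. g k) \<le> B * R * (sqrt (real p + 2 * (\<Sum>i. 1 / (1 + real i)\<^sup>2)) * (Zd S1 S2 + Zd S1 S2 * \<Omega>))"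
    unfolding g_def using \<open>0 \<le> B\<close> \<open>0 \<le> R\<close> suminf_weighted_le(1)[OF sw su sv \<open>0 \<le> delta S1 S2 n\<close>]
    by (simp add: suminf_mult mult_left_mono)
  then show "cmod (\<Sum>k. t k) \<le> series_const p \<Omega> * Zd S1 S2 * B"
    using norm_suminf_le[OF t_le_g sg] by (simp add: series_const_def R_def algebra_simps)
qed

lemma series_const_nonneg: "0 < \<Omega> \<Longrightarrow> 0 \<le> series_const p \<Omega>"
  using row_const_nonneg[of \<Omega> "1 + \<Omega>"] suminf_nonneg[OF summable_inverse_one_plus_power2]
  by (simp add: series_const_def decay_const_def)

lemma norm_cos_le_cball:
  assumes "z \<in> cball (of_real c) R" "0 \<le> x" "x \<le> pi"
  shows "cmod (cos (z * of_real x)) \<le> exp (R * pi)"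
proof -
  have "\<bar>Im z\<bar> \<le> R"
    using assms(1) abs_Im_le_cmod[of "z - of_real c"] by (simp add: dist_norm norm_minus_commute)
  then show ?thesis
    using norm_cos_mult_of_real_le(1) assms(2,3) by blast
qed

lemma norm_cos_le_cball_rhoT:
  assumes "z \<in> cball (rhoT p n) R" "0 \<le> x" "x \<le> pi"
  shows "cmod (cos (z * of_real x)) \<le> exp (R * pi)"
  using norm_cos_le_cball[of z "real (n - Suc p)" R x] assms by (simp add: rhoT_eq)

lemma cos_mult_of_real_holomorphic: "(\<lambda>z. cos (z * of_real x)) holomorphic_on A"
  by (intro holomorphic_intros)

lemma phiT_diff_le:
  assumes "0 < \<Omega>" and S: "inBall p \<Omega> S1" "inBall p \<Omega> S2" and x: "0 \<le> x" "x \<le> pi" and "1 \<le> n"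
  shows "cmod (phiT p S1 n 0 x - phiT p S2 n 0 x) \<le> exp (4 * \<Omega> * pi) / (2 * \<Omega>) * delta S1 S2 n"
proof -
  have "rho S1 n \<in> cball (rhoT p n) (2 * \<Omega>)" "rho S2 n \<in> cball (rhoT p n) (2 * \<Omega>)"
    using inBall_rho_mem_cball[OF S(1) \<open>1 \<le> n\<close>] inBall_rho_mem_cball[OF S(2) \<open>1 \<le> n\<close>] \<open>0 < \<Omega>\<close>
    by auto
  then have "cmod (cos (rho S1 n * of_real x) - cos (rho S2 n * of_real x))
      \<le> exp (4 * \<Omega> * pi) / (2 * \<Omega>) * cmod (rho S1 n - rho S2 n)"
    by (intro holomorphic_lipschitz_cball[OF cos_mult_of_real_holomorphic \<open>0 < \<Omega>\<close>]
        norm_cos_le_cball_rhoT[OF _ x])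
  also have "\<dots> \<le> exp (4 * \<Omega> * pi) / (2 * \<Omega>) * delta S1 S2 n"
    using \<open>0 < \<Omega>\<close> by (intro mult_left_mono) (auto simp: delta_def)
  finally show ?thesis
    by (simp add: phiT_def rho_i_def)
qed

lemma psiT_diff_le:
  assumes "0 < \<Omega>" and S: "inBall p \<Omega> S1" "inBall p \<Omega> S2" and x: "0 \<le> x" "x \<le> pi" and "1 \<le> n"
  shows "cmod (psiT p S1 n 0 x - psiT p S2 n 0 x) \<le> exp (4 * \<Omega> * pi) / (2 * \<Omega> * \<Omega>) * delta S1 S2 n"
proof -
  have centre: "rhoT p n \<in> cball (rhoT p n) \<Omega>"
    using \<open>0 < \<Omega>\<close> by simp
  have "cmod (divided_diff (\<lambda>z. cos (z * of_real x)) (rho S1 n) (rhoT p n)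
        - divided_diff (\<lambda>z. cos (z * of_real x)) (rho S2 n) (rhoT p n))
      \<le> exp (4 * \<Omega> * pi) / (2 * \<Omega> * \<Omega>) * cmod (rho S1 n - rho S2 n)"
    by (rule divided_diff_lipschitz[OF cos_mult_of_real_holomorphic \<open>0 < \<Omega>\<close>
          norm_cos_le_cball_rhoT[where p = p and n = n, OF _ x] inBall_rho_mem_cball[OF S(1) \<open>1 \<le> n\<close>]
          inBall_rho_mem_cball[OF S(2) \<open>1 \<le> n\<close>] centre])
  also have "\<dots> \<le> exp (4 * \<Omega> * pi) / (2 * \<Omega> * \<Omega>) * delta S1 S2 n"
    using \<open>0 < \<Omega>\<close> by (intro mult_left_mono) (auto simp: delta_def)
  finally show ?thesis
    by (simp add: psiT_eq)
qed

theorem lemma4p1: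
  fixes p :: nat and \<Omega> :: real
  assumes "\<Omega> > 0"
  shows "\<exists>C>0. \<forall>S1 S2. inBall p \<Omega> S1 \<and> inBall p \<Omega> S2 \<longrightarrow>
    (\<forall>x\<in>{0..pi}.
      (\<forall>n\<ge>1. cmod (phiT p S1 n 0 x - phiT p S2 n 0 x) \<le> C * delta S1 S2 n
             \<and> cmod (psiT p S1 n 0 x - psiT p S2 n 0 x) \<le> C * delta S1 S2 n) \<and>
      (\<forall>(a :: nat \<Rightarrow> nat \<Rightarrow> complex) B. (\<forall>k\<ge>1. \<forall>j<2. cmod (a k j) \<le> B) \<longrightarrow>
         (\<forall>n\<ge>1. \<forall>i<2.
            summable (\<lambda>k. \<Sum>j<2. (Hm p S1 x n (Suc k) i j - Hm p S2 x n (Suc k) i j) * a (Suc k) j) \<and>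
            cmod (\<Sum>k. \<Sum>j<2. (Hm p S1 x n (Suc k) i j - Hm p S2 x n (Suc k) i j) * a (Suc k) j)
              \<le> C * Zd S1 S2 * B)))"
proof -
  define C1 where "C1 = exp (4 * \<Omega> * pi) / (2 * \<Omega>)"
  define C2 where "C2 = exp (4 * \<Omega> * pi) / (2 * \<Omega> * \<Omega>)"
  define C where "C = C1 + C2 + series_const p \<Omega> + 1"
  have "0 \<le> C1" "0 \<le> C2" "0 \<le> series_const p \<Omega>"
    using assms series_const_nonneg by (simp_all add: C1_def C2_def)
  then have C: "0 < C" "C1 \<le> C" "C2 \<le> C" "series_const p \<Omega> \<le> C"
    by (simp_all add: C_def)
  have weaken: "e \<le> c * t \<Longrightarrow> c \<le> C \<Longrightarrow> 0 \<le> t \<Longrightarrow> e \<le> C * t" for e c t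
    by (meson mult_right_mono order_trans)
  show ?thesis
  proof (intro exI[of _ C] conjI[OF C(1)] allI impI ballI conjI)
    fix S1 S2 and x :: real and n :: nat
    assume "inBall p \<Omega> S1 \<and> inBall p \<Omega> S2" "x \<in> {0..pi}" "1 \<le> n"
    then have S: "inBall p \<Omega> S1" "inBall p \<Omega> S2" and x: "0 \<le> x" "x \<le> pi"
      by auto
    show "cmod (phiT p S1 n 0 x - phiT p S2 n 0 x) \<le> C * delta S1 S2 n"
      using phiT_diff_le[OF assms S x \<open>1 \<le> n\<close>] C(2) by (intro weaken) (auto simp: C1_def delta_def)
    show "cmod (psiT p S1 n 0 x - psiT p S2 n 0 x) \<le> C * delta S1 S2 n"
      using psiT_diff_le[OF assms S x \<open>1 \<le> n\<close>] C(3) by (intro weaken) (auto simp: C2_def delta_def)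
  next
    fix S1 S2 and x :: real and a :: "nat \<Rightarrow> nat \<Rightarrow> complex" and B :: real and n i :: nat
    assume "inBall p \<Omega> S1 \<and> inBall p \<Omega> S2" "x \<in> {0..pi}" "\<forall>k\<ge>1. \<forall>j<2. cmod (a k j) \<le> B" "1 \<le> n"
    then have S: "inBall p \<Omega> S1" "inBall p \<Omega> S2" and x: "0 \<le> x" "x \<le> pi"
      and a: "\<And>k j. 1 \<le> k \<Longrightarrow> j < 2 \<Longrightarrow> cmod (a k j) \<le> B"
      by auto
    note series = Hm_diff_series_le[where a = a and i = i, OF assms S x \<open>1 \<le> n\<close> a]
    show "summable (\<lambda>k. \<Sum>j<2. (Hm p S1 x n (Suc k) i j - Hm p S2 x n (Suc k) i j) * a (Suc k) j)"
      by (rule series(1))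
    have "0 \<le> Zd S1 S2 * B"
      using order_trans[OF delta_nonneg delta_le_Zd[OF S order_refl]] order_trans[OF norm_ge_zero a[of 1 0]]
      by simp
    then show "cmod (\<Sum>k. \<Sum>j<2. (Hm p S1 x n (Suc k) i j - Hm p S2 x n (Suc k) i j) * a (Suc k) j)
        \<le> C * Zd S1 S2 * B"
      using series(2) C(4) weaken by (simp add: mult.assoc)
  qed
qed

end
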